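(* Let $r\ge 1$ and let $\Gamma$ be a $(d-1)$-dimensional simplicial complex. (1) If $\mathrm{gr}_1(\Gamma)>2r$, then for any two vertices $u,v$ there are at most $(d-1)^{r-1}$ non-returning walks of length $r$ from $u$ to $v$. (2) If $\mathrm{gr}_1(\Gamma)>2r+1$ and $\{u,v\}$ is an edge, then any non-returning walk of length $r+1$ whose first step is $(u,v)$ and any non-returning walk of length $r+1$ whose first step is $(v,u)$ have different final vertices.
   Context: A simplicial complex $\Gamma$ on a finite vertex set $V=V(\Gamma)$ is a family of subsets of $V$ (faces) closed under taking subsets; its dimension is $\max\{|F|:F\in\Gamma\}-1$. A non-returning walk of length $k$ from $v_0$ to $v_k$ is a sequence of vertices $(v_0,v_1,\dots,v_k)$ (viewed as the sequence of directed edges $\vec{v_0v_1},\dots,\vec{v_{k-1}v_k}$) such that each $\{v_j,v_{j+1}\}$ is an edge of $\Gamma$ and, for all $0\le j\le k-2$, $v_j\neq v_{j+2}$ and $\{v_j,v_{j+1},v_{j+2}\}\notin\Gamma$; its first step is $(v_0,v_1)$. For $W\subseteq V$, $\Gamma[W]=\{F\in\Gamma:F\subseteq W\}$; for a face $F$ (possibly empty), $\mathrm{lk}_\Gamma(F)=\{G\setminus F: F\subseteq G\in\Gamma\}$. Fix a field $\mathbf{k}$; $\tilde H_i(\cdot;\mathbf{k})$ is reduced simplicial homology. The $1$-girth is $\mathrm{gr}_{1}(\Gamma)=\min\{|W|: W\subseteq V(\Gamma),\ \tilde H_{1}(\mathrm{lk}_\Gamma(F)[W];\mathbf{k})\neq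 0 \text{ for some face } F\in\Gamma \text{ (including } F=\emptyset)\}$, or $\infty$ if none exists. *)

theory Defs
  imports Main "HOL-Library.Extended_Nat"
begin

definition simplicial_complex :: "'a set set \<Rightarrow> bool" where
  "simplicial_complex \<Gamma> \<longleftrightarrow> finite \<Gamma> \<and> (\<forall>F\<in>\<Gamma>. finite F) \<and> {} \<in> \<Gamma> \<and>
     (\<forall>F\<in>\<Gamma>. \<forall>G. G \<subseteq> F \<longrightarrow> G \<in> \<Gamma>)"

definition vertices :: "'a set set \<Rightarrow> 'a set" where
  "vertices \<Gamma> = \<Union>\<Gamma>"

definition sc_dim :: "'a set set \<Rightarrow> int" where
  "sc_dim \<Gamma> = int (Max (card ` \<Gamma>)) - 1"

definition induced :: "'a set set \<Rightarrow> 'a set \<Rightarrow> 'a set set" where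
  "induced \<Gamma> W = {F \<in> \<Gamma>. F \<subseteq> W}"

definition link :: "'a set set \<Rightarrow> 'a set \<Rightarrow> 'a set set" where
  "link \<Gamma> F = {G - F | G. G \<in> \<Gamma> \<and> F \<subseteq> G}"

text \<open>Simplicial chains with coefficients in a field 'k, edges and triangles oriented
by the linear order on vertices: [a,b] with a<b, [a,b,c] with a<b<c.\<close>

definition boundary1 :: "'a::linorder set set \<Rightarrow> ('a set \<Rightarrow> 'k::field) \<Rightarrow> 'a \<Rightarrow> 'k" where
  "boundary1 \<Delta> c v = (\<Sum>E\<in>{E\<in>\<Delta>. card E = 2 \<and> v \<in> E}.
        (if v = Max E then 1 else -1) * c E)"

definition boundary2 :: "'a::linorder set set \<Rightarrow> ('a set \<Rightarrow> 'k::field) \<Rightarrow> 'a set \<Rightarrow> 'k" where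
  "boundary2 \<Delta> t E = (\<Sum>T\<in>{T\<in>\<Delta>. card T = 3 \<and> E \<subseteq> T}.
        (-1) ^ card {y\<in>T. y < (THE x. x \<in> T - E)} * t T)"

definition is_1cycle :: "'a::linorder set set \<Rightarrow> ('a set \<Rightarrow> 'k::field) \<Rightarrow> bool" where
  "is_1cycle \<Delta> c \<longleftrightarrow> (\<forall>E. c E \<noteq> 0 \<longrightarrow> E \<in> \<Delta> \<and> card E = 2) \<and> (\<forall>v. boundary1 \<Delta> c v = 0)"

definition is_1boundary :: "'a::linorder set set \<Rightarrow> ('a set \<Rightarrow> 'k::field) \<Rightarrow> bool" where
  "is_1boundary \<Delta> c \<longleftrightarrow> (\<exists>t. (\<forall>T. t T \<noteq> 0 \<longrightarrow> T \<in> \<Delta> \<and> card T = 3) \<and>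
       (\<forall>E. E \<in> \<Delta> \<and> card E = 2 \<longrightarrow> boundary2 \<Delta> t E = c E))"

text \<open>\<open>H1_nonzero TYPE('k) \<Delta>\<close>: reduced first homology of \<Delta> with coefficients in
the field 'k is nonzero, i.e. some 1-cycle is not a 1-boundary (ker/im \<noteq> 0).\<close>
definition H1_nonzero :: "'k::field itself \<Rightarrow> 'a::linorder set set \<Rightarrow> bool" where
  "H1_nonzero _ \<Delta> \<longleftrightarrow> (\<exists>c :: 'a set \<Rightarrow> 'k. is_1cycle \<Delta> c \<and> \<not> is_1boundary \<Delta> c)"

definition girth1 :: "'k::field itself \<Rightarrow> 'a::linorder set set \<Rightarrow> enat" where
  "girth1 K \<Gamma> = (INF W \<in> {W. W \<subseteq> vertices \<Gamma> \<and>
       (\<exists>F\<in>\<Gamma>. H1_nonzero K (induced (link \<Gamma> F) W))}. enat (card W))"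

definition is_edge :: "'a set set \<Rightarrow> 'a \<Rightarrow> 'a \<Rightarrow> bool" where
  "is_edge \<Gamma> x y \<longleftrightarrow> x \<noteq> y \<and> {x, y} \<in> \<Gamma>"

definition nr_walk :: "'a set set \<Rightarrow> nat \<Rightarrow> 'a list \<Rightarrow> bool" where
  "nr_walk \<Gamma> k vs \<longleftrightarrow> length vs = k + 1 \<and>
     (\<forall>j<k. is_edge \<Gamma> (vs ! j) (vs ! (j+1))) \<and>
     (\<forall>j. j + 2 \<le> k \<longrightarrow> vs ! j \<noteq> vs ! (j+2) \<and> {vs ! j, vs ! (j+1), vs ! (j+2)} \<notin> \<Gamma>)"

end

theory Submission
  imports Defs
begin

text \<open>
  The whole argument rests on one fact: a closed non-returning walk of length \<open>n\<close> forces
  \<open>gr\<^sub>1(\<Gamma>) \<le> n\<close> (lemma \<open>girth_le_closed_walk\<close>). A shortest closed non-returning walk has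
  no repeated vertices and no chords (either would give a shorter closed walk), so its vertex
  set \<open>W\<close> induces a cycle in \<open>\<Gamma>\<close> with no 2-faces, whose fundamental class is a
  non-trivial element of \<open>H\<^sub>1(\<Gamma>[W])\<close>. The homological input is the explicit 1-chain of a
  closed walk (\<open>path_chain\<close>): it is a cycle, and without 2-faces it cannot be a boundary.

  Part (2) of the theorem follows directly: two walks leaving an edge in opposite directions and
  meeting would form a closed walk of length \<open>2r+1\<close>. For part (1) we induct on \<open>r\<close>: if
  \<open>gr\<^sub>1(\<Gamma>) > 3\<close>, then \<open>\<Gamma>\<close> has the flag property in every link (\<open>flag_face\<close>), and two
  walks of length \<open>r\<close> with common ends but different penultimate vertices have last edges
  spanning a triangle (\<open>common_ends_face\<close>). Hence the penultimate vertices of all walks from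
  \<open>u\<close> to \<open>v\<close> span a face together with \<open>v\<close>, so there are at most \<open>d - 1\<close> of them.
\<close>

section \<open>Non-returning walks as sequences\<close>

text \<open>It is convenient to view a walk as a function from positions to vertices:
  \<open>nonreturning \<Gamma> k f\<close> says that \<open>f 0, \<dots>, f k\<close> is a non-returning walk of length \<open>k\<close>.
  Segments, reversals and concatenations of walks are then simple index shifts.\<close>

definition nonreturning :: "'a set set \<Rightarrow> nat \<Rightarrow> (nat \<Rightarrow> 'a) \<Rightarrow> bool" where
  "nonreturning \<Gamma> k f \<longleftrightarrow> (\<forall>j<k. is_edge \<Gamma> (f j) (f (j+1))) \<and>
     (\<forall>j. j + 2 \<le> k \<longrightarrow> f j \<noteq> f (j+2) \<and> {f j, f (j+1), f (j+2)} \<notin> \<Gamma>)"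

lemma nr_walk_iff: "nr_walk \<Gamma> k vs \<longleftrightarrow> length vs = k + 1 \<and> nonreturning \<Gamma> k (\<lambda>j. vs ! j)"
  unfolding nr_walk_def nonreturning_def by auto

lemma nr_walk_ends:
  assumes "nr_walk \<Gamma> k w"
  shows "hd w = w ! 0" and "last w = w ! k"
proof -
  have len: "length w = k + 1" using assms unfolding nr_walk_def by simp
  then have "w \<noteq> []" by auto
  then show "hd w = w ! 0" "last w = w ! k"
    using len by (simp_all add: hd_conv_nth last_conv_nth)
qed

lemma is_edge_sym: "is_edge \<Gamma> x y \<Longrightarrow> is_edge \<Gamma> y x"
  unfolding is_edge_def by (auto simp: insert_commute)

lemma nonreturningD:
  assumes "nonreturning \<Gamma> k f"
  shows "j < k \<Longrightarrow> is_edge \<Gamma> (f j) (f (j+1))"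
    and "j + 2 \<le> k \<Longrightarrow> f j \<noteq> f (j+2)"
    and "j + 2 \<le> k \<Longrightarrow> {f j, f (j+1), f (j+2)} \<notin> \<Gamma>"
  using assms unfolding nonreturning_def by auto

lemma nonreturning_cong:
  "(\<And>j. j \<le> k \<Longrightarrow> f j = g j) \<Longrightarrow> nonreturning \<Gamma> k f = nonreturning \<Gamma> k g"
  unfolding nonreturning_def by auto

lemma nonreturning_segment:
  assumes "nonreturning \<Gamma> k f" "a \<le> b" "b \<le> k"
  shows "nonreturning \<Gamma> (b - a) (\<lambda>j. f (j + a))"
  using assms unfolding nonreturning_def
  by (auto simp: algebra_simps dest: spec[where x = "_ + a"])

lemma nonreturning_rev:
  assumes "nonreturning \<Gamma> k f"
  shows "nonreturning \<Gamma> k (\<lambda>j. f (k - j))"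
  unfolding nonreturning_def
proof (intro conjI allI impI)
  fix j assume j: "j < k"
  have "is_edge \<Gamma> (f (k - j - 1)) (f (k - j - 1 + 1))" using nonreturningD(1)[OF assms] j by auto
  moreover have "k - j - 1 + 1 = k - j" "k - (j+1) = k - j - 1" using j by auto
  ultimately show "is_edge \<Gamma> (f (k - j)) (f (k - (j + 1)))" using is_edge_sym by metis
next
  fix j assume j: "j + 2 \<le> k"
  have "f (k-j-2) \<noteq> f (k-j-2 + 2)" "{f (k-j-2), f (k-j-2 + 1), f (k-j-2 + 2)} \<notin> \<Gamma>"
    using nonreturningD(2,3)[OF assms, of "k-j-2"] j by auto
  moreover have "k-j-2+2 = k - j" "k-j-2+1 = k - (j+1)" "k - (j+2) = k-j-2" using j by auto
  ultimately show "f (k - j) \<noteq> f (k - (j + 2))"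
    and "{f (k - j), f (k - (j + 1)), f (k - (j + 2))} \<notin> \<Gamma>"
    by (auto simp: insert_commute)
qed

lemma nonreturning_glue:
  assumes f: "nonreturning \<Gamma> a f" and g: "nonreturning \<Gamma> b g" and joint: "f a = g 0"
    and junction: "1 \<le> a \<Longrightarrow> 1 \<le> b \<Longrightarrow> f (a-1) \<noteq> g 1 \<and> {f (a-1), f a, g 1} \<notin> \<Gamma>"
  shows "nonreturning \<Gamma> (a+b) (\<lambda>j. if j \<le> a then f j else g (j - a))"
  unfolding nonreturning_def
proof (rule conjI; intro allI impI)
  fix j assume j: "j < a + b"
  show "is_edge \<Gamma> (if j \<le> a then f j else g (j - a)) (if j + 1 \<le> a then f (j + 1) else g (j + 1 - a))"
  proof (cases "j < a")
    case True then show ?thesis using nonreturningD(1)[OF f] by auto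
  next
    case False
    then have "j - a < b" "j + 1 - a = j - a + 1" using j by auto
    then show ?thesis using nonreturningD(1)[OF g, of "j - a"] False joint
      by (cases "j = a") auto
  qed
next
  fix j assume j: "j + 2 \<le> a + b"
  let ?h = "\<lambda>j. if j \<le> a then f j else g (j - a)"
  consider "j + 2 \<le> a" | "j + 1 = a" | "a \<le> j" by linarith
  then show "?h j \<noteq> ?h (j + 2) \<and> {?h j, ?h (j + 1), ?h (j + 2)} \<notin> \<Gamma>"
  proof cases
    case 1 then show ?thesis using nonreturningD(2,3)[OF f] by auto
  next
    case 2
    then have "j = a - 1" "j + 2 - a = 1" "1 \<le> a" "1 \<le> b" using j by auto
    then show ?thesis using junction 2 by auto
  next
    case 3
    then have "?h j = g (j - a)" "j + 1 - a = j - a + 1" "j + 2 - a = j - a + 2" "j - a + 2 \<le> b"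
      using joint j by auto
    then show ?thesis using nonreturningD(2,3)[OF g, of "j - a"] 3 by auto
  qed
qed

section \<open>Homology of a cycle without triangles\<close>

definition edge_sign :: "'a::linorder \<Rightarrow> 'a \<Rightarrow> 'k::field" where
  "edge_sign x y = (if y = max x y then 1 else -1)"

definition path_chain :: "(nat \<Rightarrow> 'a::linorder) \<Rightarrow> nat \<Rightarrow> 'a set \<Rightarrow> 'k::field" where
  "path_chain g n E = (\<Sum>i<n. if E = {g i, g (Suc i)} then edge_sign (g i) (g (Suc i)) else 0)"

lemma boundary1_path_chain:
  fixes g :: "nat \<Rightarrow> 'a::linorder"
  assumes fin: "finite \<Delta>" and edges: "\<And>i. i < n \<Longrightarrow> g i \<noteq> g (Suc i) \<and> {g i, g (Suc i)} \<in> \<Delta>"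
  shows "boundary1 \<Delta> (path_chain g n :: 'a set \<Rightarrow> 'k::field) v =
         (if v = g n then 1 else 0) - (if v = g 0 then 1 else 0)"
proof -
  define e where "e i = {g i, g (Suc i)}" for i
  define A where "A = {E \<in> \<Delta>. card E = 2 \<and> v \<in> E}"
  define sg :: "'a set \<Rightarrow> 'k" where "sg E = (if v = Max E then 1 else -1)" for E
  define tau :: "nat \<Rightarrow> 'k" where "tau i = edge_sign (g i) (g (Suc i))" for i
  have finA: "finite A" using fin unfolding A_def by simp
  have eA: "e i \<in> A \<longleftrightarrow> v \<in> e i" if "i < n" for i
    using edges[OF that] unfolding A_def e_def by auto
  have step: "(if e i \<in> A then sg (e i) * tau i else 0) =
              (if v = g (Suc i) then 1 else 0) - (if v = g i then 1 else 0)" if i: "i < n" for i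
  proof -
    have ne: "g i \<noteq> g (Suc i)" using edges[OF i] by simp
    have M: "Max (e i) = max (g i) (g (Suc i))" unfolding e_def by simp
    consider "v = g (Suc i)" | "v = g i" | "v \<notin> e i" unfolding e_def by auto
    then show ?thesis
    proof cases
      case 1
      then show ?thesis using eA[OF i] ne unfolding sg_def tau_def edge_sign_def M e_def by simp
    next
      case 2
      then have "sg (e i) * tau i = -1"
        using ne unfolding sg_def tau_def edge_sign_def M by (cases "g i < g (Suc i)") (auto simp: max_def)
      then show ?thesis using eA[OF i] ne 2 unfolding e_def by simp
    next
      case 3
      then show ?thesis using eA[OF i] unfolding e_def by auto
    qed
  qed
  have "boundary1 \<Delta> (path_chain g n) v = (\<Sum>E\<in>A. sg E * path_chain g n E)"
    unfolding boundary1_def A_def sg_def by simp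
  also have "\<dots> = (\<Sum>E\<in>A. \<Sum>i<n. if E = e i then sg E * tau i else 0)"
    unfolding path_chain_def sum_distrib_left e_def tau_def by (intro sum.cong refl) simp
  also have "\<dots> = (\<Sum>i<n. \<Sum>E\<in>A. if E = e i then sg E * tau i else 0)"
    by (rule sum.swap)
  also have "\<dots> = (\<Sum>i<n. if e i \<in> A then sg (e i) * tau i else 0)"
    by (intro sum.cong refl) (rule sum.delta[OF finA])
  also have "\<dots> = (\<Sum>i<n. (if v = g (Suc i) then 1 else 0) - (if v = g i then 1 else 0))"
    by (intro sum.cong refl) (simp add: step)
  also have "\<dots> = (if v = g n then 1 else 0) - (if v = g 0 then 1 else 0)"
    by (rule sum_lessThan_telescope[where f = "\<lambda>i. if v = g i then 1 else 0"])
  finally show ?thesis .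
qed

lemma path_chain_is_1cycle:
  fixes g :: "nat \<Rightarrow> 'a::linorder"
  assumes "finite \<Delta>" and "\<And>i. i < n \<Longrightarrow> g i \<noteq> g (Suc i) \<and> {g i, g (Suc i)} \<in> \<Delta>"
    and closed: "g n = g 0"
  shows "is_1cycle \<Delta> (path_chain g n :: 'a set \<Rightarrow> 'k::field)"
  unfolding is_1cycle_def
proof (rule conjI; intro allI impI)
  fix E assume "(path_chain g n E :: 'k) \<noteq> 0"
  then obtain i where "i < n" "E = {g i, g (Suc i)}"
    unfolding path_chain_def by (auto elim!: sum.not_neutral_contains_not_neutral split: if_splits)
  then show "E \<in> \<Delta> \<and> card E = 2" using assms(2)[of i] by auto
next
  fix v show "boundary1 \<Delta> (path_chain g n :: 'a set \<Rightarrow> 'k) v = 0"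
    using boundary1_path_chain[where g = g and n = n, OF assms(1,2)] closed by simp
qed

lemma path_chain_first_edge:
  assumes "1 \<le> n" and once: "\<And>i. 0 < i \<Longrightarrow> i < n \<Longrightarrow> {g i, g (Suc i)} \<noteq> {g 0, g 1}"
  shows "path_chain g n {g 0, g 1} = (edge_sign (g 0) (g 1) :: 'k::field)"
proof -
  have "path_chain g n {g 0, g 1} = (\<Sum>i<n. if i = 0 then edge_sign (g 0) (g 1) else (0::'k))"
    unfolding path_chain_def
  proof (intro sum.cong refl)
    fix i assume "i \<in> {..<n}"
    then show "(if {g 0, g 1} = {g i, g (Suc i)} then edge_sign (g i) (g (Suc i)) else 0) =
               (if i = 0 then edge_sign (g 0) (g 1) else (0::'k))"
      using once[of i] by (cases "i = 0") auto
  qed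
  then show ?thesis using assms(1) by (simp add: sum.delta)
qed

lemma boundary_without_triangles:
  assumes no_triangles: "\<And>T. T \<in> \<Delta> \<Longrightarrow> card T \<noteq> 3"
    and "is_1boundary \<Delta> c" and "E \<in> \<Delta>" "card E = 2"
  shows "c E = 0"
proof -
  obtain t where t: "\<And>T. t T \<noteq> 0 \<Longrightarrow> T \<in> \<Delta> \<and> card T = 3"
    and b: "boundary2 \<Delta> t E = c E"
    using assms(2-4) unfolding is_1boundary_def by blast
  have "t T = 0" for T using t[of T] no_triangles[of T] by blast
  then show ?thesis using b unfolding boundary2_def by simp
qed

lemma cycle_H1_nonzero:
  fixes \<Delta> :: "'a::linorder set set" and g :: "nat \<Rightarrow> 'a" and K :: "'k::field itself"
  assumes fin: "finite \<Delta>" and n: "1 \<le> n" and closed: "g n = g 0"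
    and edges: "\<And>i. i < n \<Longrightarrow> g i \<noteq> g (Suc i) \<and> {g i, g (Suc i)} \<in> \<Delta>"
    and no_triangles: "\<And>T. T \<in> \<Delta> \<Longrightarrow> card T \<noteq> 3"
    and once: "\<And>i. 0 < i \<Longrightarrow> i < n \<Longrightarrow> {g i, g (Suc i)} \<noteq> {g 0, g 1}"
  shows "H1_nonzero K \<Delta>"
proof -
  let ?c = "path_chain g n :: 'a set \<Rightarrow> 'k"
  have "?c {g 0, g 1} = edge_sign (g 0) (g 1)" by (rule path_chain_first_edge[OF n once])
  then have "?c {g 0, g 1} \<noteq> 0" by (simp add: edge_sign_def)
  moreover have "{g 0, g 1} \<in> \<Delta>" "card {g 0, g 1} = 2" using edges[of 0] n by auto
  ultimately have "\<not> is_1boundary \<Delta> ?c"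
    using boundary_without_triangles[OF no_triangles] by blast
  then show ?thesis
    unfolding H1_nonzero_def using path_chain_is_1cycle[OF fin edges closed] by blast
qed

lemma sc_closed: "simplicial_complex \<Gamma> \<Longrightarrow> G \<in> \<Gamma> \<Longrightarrow> H \<subseteq> G \<Longrightarrow> H \<in> \<Gamma>"
  unfolding simplicial_complex_def by blast

lemma finite_induced_link:
  assumes sc: "simplicial_complex \<Gamma>"
  shows "finite (induced (link \<Gamma> F) W)"
proof -
  have "link \<Gamma> F = (\<lambda>G. G - F) ` {G \<in> \<Gamma>. F \<subseteq> G}" unfolding link_def by auto
  then have "finite (link \<Gamma> F)" using sc unfolding simplicial_complex_def by auto
  then show ?thesis unfolding induced_def by auto
qed

lemma link_empty: "link \<Gamma> {} = \<Gamma>"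
  unfolding link_def by auto

lemma face_card_le:
  assumes "simplicial_complex \<Gamma>" "F \<in> \<Gamma>"
  shows "card F \<le> Max (card ` \<Gamma>)"
  using assms unfolding simplicial_complex_def by (intro Max_ge) auto

lemma girth_le:
  assumes "F \<in> \<Gamma>" "W \<subseteq> vertices \<Gamma>" "H1_nonzero K (induced (link \<Gamma> F) W)"
  shows "girth1 K \<Gamma> \<le> enat (card W)"
  unfolding girth1_def by (rule INF_lower) (use assms in auto)

text \<open>If \<open>gr\<^sub>1(\<Gamma>) > 3\<close>, every triangle of edges in a link spans a face: otherwise the
  triangle is a non-trivial cycle in the restriction of the link to its three vertices.\<close>
lemma triangle_face:
  fixes \<Gamma> :: "'a::linorder set set" and K :: "'k::field itself"
  assumes sc: "simplicial_complex \<Gamma>" and girth: "enat 3 < girth1 K \<Gamma>" and F: "F \<in> \<Gamma>"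
    and distinct: "x \<noteq> y" "y \<noteq> z" "x \<noteq> z" and outside: "x \<notin> F" "y \<notin> F" "z \<notin> F"
    and edges: "insert x (insert y F) \<in> \<Gamma>" "insert y (insert z F) \<in> \<Gamma>" "insert x (insert z F) \<in> \<Gamma>"
  shows "insert x (insert y (insert z F)) \<in> \<Gamma>"
proof (rule ccontr)
  assume missing: "insert x (insert y (insert z F)) \<notin> \<Gamma>"
  define \<Delta> where "\<Delta> = induced (link \<Gamma> F) {x,y,z}"
  define g :: "nat \<Rightarrow> 'a" where "g i = (if i = 0 then x else if i = 1 then y else if i = 2 then z else x)" for i
  have link_edge: "{a,b} \<in> \<Delta>"
    if "insert a (insert b F) \<in> \<Gamma>" "a \<notin> F" "b \<notin> F" "a \<in> {x,y,z}" "b \<in> {x,y,z}" for a b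
  proof -
    have "{a,b} = insert a (insert b F) - F" using that by auto
    then have "{a,b} \<in> link \<Gamma> F" unfolding link_def using that by blast
    then show ?thesis unfolding \<Delta>_def induced_def using that by auto
  qed
  have no_triangles: "card T \<noteq> 3" if T: "T \<in> \<Delta>" for T
  proof
    assume c3: "card T = 3"
    have "T \<subseteq> {x,y,z}" "card {x,y,z} = 3" using T distinct unfolding \<Delta>_def induced_def by auto
    then have T3: "T = {x,y,z}" using card_subset_eq[of "{x,y,z}" T] c3 by auto
    obtain G where G: "G \<in> \<Gamma>" "F \<subseteq> G" "T = G - F"
      using T unfolding \<Delta>_def induced_def link_def by auto
    then have "G = insert x (insert y (insert z F))" using T3 by auto
    then show False using G missing by simp
  qed
  have "H1_nonzero K \<Delta>"
  proof (rule cycle_H1_nonzero[where n = 3 and g = g])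
    show "finite \<Delta>" unfolding \<Delta>_def by (rule finite_induced_link[OF sc])
  next
    fix i :: nat assume "i < 3"
    then have "i = 0 \<or> i = 1 \<or> i = 2" by auto
    then show "g i \<noteq> g (Suc i) \<and> {g i, g (Suc i)} \<in> \<Delta>"
      using link_edge[OF edges(1)] link_edge[OF edges(2)] link_edge[OF edges(3)] outside distinct
      unfolding g_def by (auto simp: insert_commute)
  next
    fix i :: nat assume "0 < i" "i < 3"
    then have "i = 1 \<or> i = 2" by auto
    then show "{g i, g (Suc i)} \<noteq> {g 0, g 1}"
      using distinct unfolding g_def by (auto simp: doubleton_eq_iff)
  qed (use no_triangles g_def in auto)
  moreover have "{x,y,z} \<subseteq> vertices \<Gamma>" unfolding vertices_def using edges by blast
  ultimately have "girth1 K \<Gamma> \<le> enat (card {x,y,z})"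
    unfolding \<Delta>_def by (rule girth_le[OF F, rotated])
  moreover have "card {x,y,z} = 3" using distinct by simp
  ultimately show False using girth by (simp add: leD)
qed

lemma flag_face:
  fixes \<Gamma> :: "'a::linorder set set" and K :: "'k::field itself"
  assumes sc: "simplicial_complex \<Gamma>" and girth: "enat 3 < girth1 K \<Gamma>" and fin: "finite S"
  shows "F \<in> \<Gamma> \<Longrightarrow> S \<inter> F = {} \<Longrightarrow> (\<forall>x\<in>S. insert x F \<in> \<Gamma>) \<Longrightarrow>
         (\<forall>x\<in>S. \<forall>y\<in>S. x \<noteq> y \<longrightarrow> insert x (insert y F) \<in> \<Gamma>) \<Longrightarrow> S \<union> F \<in> \<Gamma>"
  using fin
proof (induction S arbitrary: F rule: finite_induct)
  case empty then show ?case by simp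
next
  case (insert x S)
  have "S \<union> insert x F \<in> \<Gamma>"
  proof (rule insert.IH)
    show "insert x F \<in> \<Gamma>" "S \<inter> insert x F = {}" "\<forall>y\<in>S. insert y (insert x F) \<in> \<Gamma>"
      using insert.prems insert.hyps by auto
    show "\<forall>y\<in>S. \<forall>z\<in>S. y \<noteq> z \<longrightarrow> insert y (insert z (insert x F)) \<in> \<Gamma>"
    proof (intro ballI impI)
      fix y z assume yz: "y \<in> S" "z \<in> S" "y \<noteq> z"
      have "insert x (insert y (insert z F)) \<in> \<Gamma>"
        using triangle_face[OF sc girth, of F x y z] insert.prems insert.hyps yz by auto
      then show "insert y (insert z (insert x F)) \<in> \<Gamma>" by (simp add: insert_commute)
    qed
  qed
  then show ?case by simp
qed

section \<open>Short closed walks are excluded by the 1-girth\<close>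

text \<open>A closed non-returning walk \<open>f 0, \<dots>, f n = f 0\<close>; no condition is imposed at the base point.\<close>
definition closed_nr_walk :: "'a set set \<Rightarrow> nat \<Rightarrow> (nat \<Rightarrow> 'a) \<Rightarrow> bool" where
  "closed_nr_walk \<Gamma> n f \<longleftrightarrow> 1 \<le> n \<and> nonreturning \<Gamma> n f \<and> f n = f 0"

text \<open>Edges join distinct vertices and walks do not backtrack, so closed walks have length \<open>\<ge> 3\<close>.\<close>
lemma closed_nr_walk_length:
  assumes "closed_nr_walk \<Gamma> n f"
  shows "3 \<le> n"
proof (rule ccontr)
  assume "\<not> 3 \<le> n"
  moreover have nr: "nonreturning \<Gamma> n f" and "1 \<le> n" "f n = f 0"
    using assms unfolding closed_nr_walk_def by auto
  ultimately consider "n = 1" | "n = 2" by linarith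
  then show False
  proof cases
    case 1 then show False using nonreturningD(1)[OF nr, of 0] \<open>f n = f 0\<close> unfolding is_edge_def by auto
  next
    case 2 then show False using nonreturningD(2)[OF nr, of 0] \<open>f n = f 0\<close> by (simp add: numeral_2_eq_2)
  qed
qed

lemma closed_walk_repeat:
  assumes "closed_nr_walk \<Gamma> n f" "a < b" "b \<le> n" "f a = f b"
  shows "closed_nr_walk \<Gamma> (b - a) (\<lambda>j. f (j + a))"
  using assms nonreturning_segment[of \<Gamma> n f a b] unfolding closed_nr_walk_def by auto

text \<open>Minimality guarantees that the new walk does not return at \<open>f b\<close>.\<close>
lemma closed_walk_chord:
  assumes cw: "closed_nr_walk \<Gamma> n f" and inj: "inj_on f {..<n}" and sc: "simplicial_complex \<Gamma>"
    and chord: "a + 2 \<le> b" "b < n" "is_edge \<Gamma> (f a) (f b)"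
    and minimal: "\<And>b'. a + 2 \<le> b' \<Longrightarrow> b' < b \<Longrightarrow> \<not> is_edge \<Gamma> (f a) (f b')"
  shows "\<exists>g. closed_nr_walk \<Gamma> (b - a + 1) g"
proof -
  have nr: "nonreturning \<Gamma> n f" using cw unfolding closed_nr_walk_def by simp
  define shortcut where "shortcut j = (if j = 0 then f b else f a)" for j :: nat
  have seg: "nonreturning \<Gamma> (b - a) (\<lambda>j. f (j + a))"
    using nonreturning_segment[OF nr, of a b] chord by simp
  have shortcut: "nonreturning \<Gamma> 1 shortcut"
    unfolding nonreturning_def shortcut_def using is_edge_sym[OF chord(3)] by auto
  have distinct: "f (b - 1) \<noteq> f a" using inj_onD[OF inj, of "b - 1" a] chord by auto
  have no_triangle: "{f (b - 1), f b, f a} \<notin> \<Gamma>"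
  proof
    assume T: "{f (b - 1), f b, f a} \<in> \<Gamma>"
    show False
    proof (cases "a + 2 = b")
      case True
      then have "{f a, f (a + 1), f (a + 2)} = {f (b - 1), f b, f a}" by auto
      then have "{f a, f (a + 1), f (a + 2)} \<in> \<Gamma>" using T by simp
      then show False using nonreturningD(3)[OF nr, of a] True chord by auto
    next
      case False
      have "{f a, f (b - 1)} \<in> \<Gamma>" using sc_closed[OF sc T] by auto
      then have "is_edge \<Gamma> (f a) (f (b - 1))" using distinct unfolding is_edge_def by auto
      moreover have "a + 2 \<le> b - 1" using False chord by auto
      ultimately show False using minimal[of "b - 1"] by auto
    qed
  qed
  have "nonreturning \<Gamma> (b - a + 1) (\<lambda>j. if j \<le> b - a then f (j + a) else shortcut (j - (b - a)))"
  proof (rule nonreturning_glue[OF seg shortcut])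
    show "f (b - a + a) = shortcut 0" using chord unfolding shortcut_def by simp
    have "b - a - 1 + a = b - 1" using chord by auto
    then show "f (b - a - 1 + a) \<noteq> shortcut 1 \<and> {f (b - a - 1 + a), f (b - a + a), shortcut 1} \<notin> \<Gamma>"
      using distinct no_triangle chord unfolding shortcut_def by simp
  qed
  then show ?thesis unfolding closed_nr_walk_def shortcut_def by auto
qed

lemma closed_walk_chord_shorter:
  assumes sc: "simplicial_complex \<Gamma>" and cw: "closed_nr_walk \<Gamma> n f" and inj: "inj_on f {..<n}"
    and ab: "a + 2 \<le> b" "b < n" "\<not> (a = 0 \<and> b = n - 1)" "is_edge \<Gamma> (f a) (f b)"
  shows "\<exists>m g. m < n \<and> closed_nr_walk \<Gamma> m g"
proof -
  define is_chord where "is_chord b' \<longleftrightarrow> a + 2 \<le> b' \<and> is_edge \<Gamma> (f a) (f b')" for b'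
  define b0 where "b0 = (LEAST b'. is_chord b')"
  have "is_chord b" using ab unfolding is_chord_def by simp
  then have chord: "a + 2 \<le> b0" "b0 \<le> b" "is_edge \<Gamma> (f a) (f b0)"
    using LeastI[of is_chord b] Least_le[of is_chord b] unfolding b0_def is_chord_def by auto
  have minimal: "\<not> is_edge \<Gamma> (f a) (f b')" if "a + 2 \<le> b'" "b' < b0" for b'
    using not_less_Least[of b' is_chord] that unfolding b0_def is_chord_def by blast
  obtain g where "closed_nr_walk \<Gamma> (b0 - a + 1) g"
    using closed_walk_chord[OF cw inj sc chord(1) _ chord(3) minimal] chord ab by auto
  moreover have "b0 - a + 1 < n" using chord ab by auto
  ultimately show ?thesis by blast
qed

lemma chordless_cycle_adjacent:
  fixes f :: "nat \<Rightarrow> 'a"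
  assumes inj: "inj_on f {..<n}"
    and chordless: "\<And>a b. a + 2 \<le> b \<Longrightarrow> b < n \<Longrightarrow> \<not> (a = 0 \<and> b = n - 1) \<Longrightarrow> \<not> is_edge \<Gamma> (f a) (f b)"
    and pq: "p < n" "q < n" "p \<noteq> q" "{f p, f q} \<in> \<Gamma>"
  shows "p + 1 = q \<or> q + 1 = p \<or> (p = 0 \<and> q = n - 1) \<or> (q = 0 \<and> p = n - 1)"
proof -
  have "is_edge \<Gamma> (f p) (f q)"
    using inj_onD[OF inj, of p q] pq unfolding is_edge_def by auto
  then show ?thesis
    using chordless[of p q] chordless[of q p] is_edge_sym pq by fastforce
qed

text \<open>Consequently such a walk spans no 2-face of \<open>\<Gamma>\<close>: three pairwise cyclically consecutive
  positions exist only for \<open>n = 3\<close>, where the triangle is excluded by non-returning.\<close>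
lemma chordless_cycle_no_triangle:
  fixes f :: "nat \<Rightarrow> 'a"
  assumes sc: "simplicial_complex \<Gamma>" and cw: "closed_nr_walk \<Gamma> n f" and inj: "inj_on f {..<n}"
    and chordless: "\<And>a b. a + 2 \<le> b \<Longrightarrow> b < n \<Longrightarrow> \<not> (a = 0 \<and> b = n - 1) \<Longrightarrow> \<not> is_edge \<Gamma> (f a) (f b)"
    and T: "T \<in> \<Gamma>" "T \<subseteq> f ` {..<n}"
  shows "card T \<noteq> 3"
proof
  assume "card T = 3"
  then obtain x y z where xyz: "T = {x,y,z}" "x \<noteq> y" "y \<noteq> z" "x \<noteq> z" by (auto simp: card_3_iff)
  then obtain p q s where pqs: "p < n" "q < n" "s < n" "x = f p" "y = f q" "z = f s"
    using T(2) by auto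
  have nr: "nonreturning \<Gamma> n f" and n3: "3 \<le> n"
    using cw closed_nr_walk_length[OF cw] unfolding closed_nr_walk_def by auto
  have distinct: "p \<noteq> q" "q \<noteq> s" "p \<noteq> s" using pqs xyz by auto
  have "{f p, f q} \<in> \<Gamma>" "{f q, f s} \<in> \<Gamma>" "{f p, f s} \<in> \<Gamma>"
    using sc_closed[OF sc T(1)] xyz pqs by auto
  then have "p + 1 = q \<or> q + 1 = p \<or> (p = 0 \<and> q = n - 1) \<or> (q = 0 \<and> p = n - 1)"
    and "q + 1 = s \<or> s + 1 = q \<or> (q = 0 \<and> s = n - 1) \<or> (s = 0 \<and> q = n - 1)"
    and "p + 1 = s \<or> s + 1 = p \<or> (p = 0 \<and> s = n - 1) \<or> (s = 0 \<and> p = n - 1)"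
    using chordless_cycle_adjacent[OF inj chordless] pqs distinct by auto
  then have "n = 3" using distinct pqs n3 by arith
  then have "{p, q, s} = {0, 1, 2}" using distinct pqs by auto
  moreover have "T = f ` {p, q, s}" using xyz pqs by auto
  ultimately have "{f 0, f (0 + 1), f (0 + 2)} \<in> \<Gamma>" using T(1) by (simp add: numeral_2_eq_2)
  then show False using nonreturningD(3)[OF nr, of 0] n3 by simp
qed

lemma chordless_cycle_H1:
  fixes \<Gamma> :: "'a::linorder set set" and K :: "'k::field itself"
  assumes sc: "simplicial_complex \<Gamma>" and cw: "closed_nr_walk \<Gamma> n f" and inj: "inj_on f {..<n}"
    and chordless: "\<And>a b. a + 2 \<le> b \<Longrightarrow> b < n \<Longrightarrow> \<not> (a = 0 \<and> b = n - 1) \<Longrightarrow> \<not> is_edge \<Gamma> (f a) (f b)"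
  shows "H1_nonzero K (induced \<Gamma> (f ` {..<n}))"
proof -
  have nr: "nonreturning \<Gamma> n f" and closed: "f n = f 0" and n3: "3 \<le> n"
    using cw closed_nr_walk_length[OF cw] unfolding closed_nr_walk_def by auto
  define W where "W = f ` {..<n}"
  have fW: "f i \<in> W" if "i \<le> n" for i
    using that closed n3 unfolding W_def by (cases "i = n") auto
  show ?thesis unfolding W_def[symmetric]
  proof (rule cycle_H1_nonzero[where n = n and g = f])
    show "finite (induced \<Gamma> W)" using sc unfolding simplicial_complex_def induced_def by simp
    show "1 \<le> n" "f n = f 0" using n3 closed by auto
  next
    fix i assume i: "i < n"
    then show "f i \<noteq> f (Suc i) \<and> {f i, f (Suc i)} \<in> induced \<Gamma> W"
      using nonreturningD(1)[OF nr i] fW[of i] fW[of "Suc i"] unfolding is_edge_def induced_def by auto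
  next
    fix T assume "T \<in> induced \<Gamma> W"
    then show "card T \<noteq> 3"
      using chordless_cycle_no_triangle[OF sc cw inj chordless] unfolding induced_def W_def by auto
  next
    fix i assume i: "0 < i" "i < n"
    show "{f i, f (Suc i)} \<noteq> {f 0, f 1}"
    proof
      assume "{f i, f (Suc i)} = {f 0, f 1}"
      moreover have "f i \<noteq> f 0" using inj_onD[OF inj, of i 0] i by auto
      ultimately have "f i = f 1" "f (Suc i) = f 0" by (auto simp: doubleton_eq_iff)
      then have "i = 1" using inj_onD[OF inj, of i 1] i n3 by auto
      then show False using \<open>f (Suc i) = f 0\<close> inj_onD[OF inj, of 2 0] n3 by (simp add: numeral_2_eq_2)
    qed
  qed
qed

text \<open>Every closed non-returning walk bounds the 1-girth: a shortest one has no repeated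
  vertices and no chords, hence is an induced cycle with non-vanishing homology.\<close>
lemma girth_le_closed_walk:
  fixes \<Gamma> :: "'a::linorder set set" and K :: "'k::field itself"
  assumes sc: "simplicial_complex \<Gamma>"
  shows "closed_nr_walk \<Gamma> n f \<Longrightarrow> girth1 K \<Gamma> \<le> enat n"
proof (induction n arbitrary: f rule: less_induct)
  case (less n f)
  show ?case
  proof (cases "\<exists>m g. m < n \<and> closed_nr_walk \<Gamma> m g")
    case True
    then obtain m g where "m < n" "closed_nr_walk \<Gamma> m g" by blast
    then show ?thesis using less.IH by (meson enat_ord_simps(2) less_imp_le order_trans)
  next
    case shortest: False
    have nr: "nonreturning \<Gamma> n f" and closed: "f n = f 0"
      using less.prems unfolding closed_nr_walk_def by auto
    have n3: "3 \<le> n" using closed_nr_walk_length[OF less.prems] .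
    have inj: "inj_on f {..<n}"
    proof (rule inj_onI)
      have no_repeat: "f a \<noteq> f b" if "a < b" "b < n" for a b
        using closed_walk_repeat[OF less.prems that(1) _ ] shortest that by fastforce
      fix a b assume "a \<in> {..<n}" "b \<in> {..<n}" "f a = f b"
      then show "a = b" using no_repeat[of a b] no_repeat[of b a] by (cases a b rule: linorder_cases) auto
    qed
    have chordless: "\<not> is_edge \<Gamma> (f a) (f b)"
      if "a + 2 \<le> b" "b < n" "\<not> (a = 0 \<and> b = n - 1)" for a b
      using closed_walk_chord_shorter[OF sc less.prems inj that] shortest by blast
    have "H1_nonzero K (induced (link \<Gamma> {}) (f ` {..<n}))"
      using chordless_cycle_H1[OF sc less.prems inj chordless] unfolding link_empty by simp
    moreover have "f ` {..<n} \<subseteq> vertices \<Gamma>"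
      using nonreturningD(1)[OF nr] unfolding vertices_def is_edge_def by blast
    moreover have "{} \<in> \<Gamma>" using sc unfolding simplicial_complex_def by simp
    ultimately have "girth1 K \<Gamma> \<le> enat (card (f ` {..<n}))" by (intro girth_le)
    then show ?thesis using card_image[OF inj] by simp
  qed
qed

text \<open>Two walks of length \<open>a\<close> with common end points but different penultimate vertices:
  unless their last edges span a triangle, one followed by the reverse of the other is a
  closed non-returning walk of length \<open>2a\<close>.\<close>
lemma common_ends_face:
  fixes \<Gamma> :: "'a::linorder set set" and K :: "'k::field itself"
  assumes sc: "simplicial_complex \<Gamma>" and f: "nonreturning \<Gamma> a f" and h: "nonreturning \<Gamma> a h"
    and a: "1 \<le> a" and starts: "f 0 = h 0" and ends: "f a = h a" and differ: "f (a-1) \<noteq> h (a-1)"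
    and girth: "enat (2*a) < girth1 K \<Gamma>"
  shows "{f (a-1), f a, h (a-1)} \<in> \<Gamma>"
proof (rule ccontr)
  assume no_triangle: "{f (a-1), f a, h (a-1)} \<notin> \<Gamma>"
  have "nonreturning \<Gamma> (a+a) (\<lambda>j. if j \<le> a then f j else h (a - (j - a)))"
    by (rule nonreturning_glue[OF f nonreturning_rev[OF h]]) (use ends differ no_triangle in auto)
  then have "closed_nr_walk \<Gamma> (a+a) (\<lambda>j. if j \<le> a then f j else h (a - (j - a)))"
    unfolding closed_nr_walk_def using a starts by auto
  then have "girth1 K \<Gamma> \<le> enat (a+a)" by (rule girth_le_closed_walk[OF sc])
  then show False using girth by (simp add: mult_2 leD)
qed

text \<open>Part (2) of the theorem: walks of length \<open>r+1\<close> leaving the edge \<open>{u,v}\<close> in opposite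
  directions cannot meet, since together they would form a closed walk of length \<open>2r+1\<close>.\<close>
lemma opposite_walks_distinct_ends:
  fixes \<Gamma> :: "'a::linorder set set" and K :: "'k::field itself"
  assumes sc: "simplicial_complex \<Gamma>" and girth: "enat (2*r+1) < girth1 K \<Gamma>"
    and r: "1 \<le> r" and p: "nr_walk \<Gamma> (r+1) p" "p ! 0 = u" "p ! 1 = v"
    and q: "nr_walk \<Gamma> (r+1) q" "q ! 0 = v" "q ! 1 = u"
  shows "last p \<noteq> last q"
proof
  assume same_end: "last p = last q"
  have P: "nonreturning \<Gamma> (r+1) (\<lambda>j. p ! j)" and Q: "nonreturning \<Gamma> (r+1) (\<lambda>j. q ! j)"
    using p(1) q(1) unfolding nr_walk_iff by auto
  have Q_tail: "nonreturning \<Gamma> r (\<lambda>j. q ! (j + 1))"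
    using nonreturning_segment[OF Q, of 1 "r+1"] by simp
  let ?g = "\<lambda>j. if j \<le> r + 1 then p ! (r + 1 - j) else q ! (j - (r + 1) + 1)"
  have "nonreturning \<Gamma> (r + 1 + r) ?g"
  proof (rule nonreturning_glue[OF nonreturning_rev[OF P] Q_tail])
    show "p ! (r + 1 - (r + 1)) = q ! (0 + 1)" using p q by simp
    show "p ! (r + 1 - (r + 1 - 1)) \<noteq> q ! (1 + 1) \<and>
               {p ! (r + 1 - (r + 1 - 1)), p ! (r + 1 - (r + 1)), q ! (1 + 1)} \<notin> \<Gamma>"
      using nonreturningD(2,3)[OF Q, of 0] r p q by (simp add: insert_commute numeral_2_eq_2)
  qed
  moreover have "?g (r + 1 + r) = ?g 0"
    using same_end nr_walk_ends(2)[OF p(1)] nr_walk_ends(2)[OF q(1)] r by simp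
  ultimately have "closed_nr_walk \<Gamma> (r + 1 + r) ?g" unfolding closed_nr_walk_def by simp
  then have "girth1 K \<Gamma> \<le> enat (r + 1 + r)" by (rule girth_le_closed_walk[OF sc])
  then show False using girth by (simp add: mult_2 add.commute add.left_commute leD)
qed

section \<open>Counting walks between two vertices\<close>

definition walks :: "'a set set \<Rightarrow> nat \<Rightarrow> 'a \<Rightarrow> 'a \<Rightarrow> 'a list set" where
  "walks \<Gamma> k u v = {w. nr_walk \<Gamma> k w \<and> hd w = u \<and> last w = v}"

text \<open>Walks of positive length only visit vertices of the finite complex.\<close>
lemma walks_finite:
  assumes sc: "simplicial_complex \<Gamma>" and k: "1 \<le> k"
  shows "finite (walks \<Gamma> k u v)"
proof (rule finite_subset)
  have "set w \<subseteq> vertices \<Gamma>" if w: "nr_walk \<Gamma> k w" for w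
  proof
    fix x assume "x \<in> set w"
    then obtain i where "i < length w" "x = w ! i" by (auto simp: in_set_conv_nth)
    then have i: "i \<le> k" "x = w ! i" using w unfolding nr_walk_def by auto
    have nr: "nonreturning \<Gamma> k (\<lambda>j. w ! j)" using w unfolding nr_walk_iff by simp
    have "\<exists>j<k. i = j \<or> i = j + 1"
    proof (cases "i < k")
      case False then show ?thesis using i k by (intro exI[of _ "k - 1"]) auto
    qed auto
    then show "x \<in> vertices \<Gamma>"
      using nonreturningD(1)[OF nr] i unfolding vertices_def is_edge_def by blast
  qed
  then show "walks \<Gamma> k u v \<subseteq> {w. set w \<subseteq> vertices \<Gamma> \<and> length w = k + 1}"
    unfolding walks_def nr_walk_def by auto
  show "finite {w. set w \<subseteq> vertices \<Gamma> \<and> length w = k + 1}"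
    using sc by (intro finite_lists_length_eq) (simp add: simplicial_complex_def vertices_def)
qed

lemma walks_butlast:
  assumes "w \<in> walks \<Gamma> (Suc m) u v"
  shows "butlast w \<in> walks \<Gamma> m u (w ! m)" and "is_edge \<Gamma> (w ! m) v"
proof -
  have w: "nr_walk \<Gamma> (Suc m) w" "hd w = u" "last w = v" using assms unfolding walks_def by auto
  have len: "length w = m + 2" and nr: "nonreturning \<Gamma> (Suc m) (\<lambda>j. w ! j)"
    using w(1) unfolding nr_walk_iff by auto
  have same: "butlast w ! j = w ! j" if "j \<le> m" for j using that len by (simp add: nth_butlast)
  have "nonreturning \<Gamma> m (\<lambda>j. w ! j)"
    using nonreturning_segment[OF nr, of 0 m] by simp
  then have "nr_walk \<Gamma> m (butlast w)"
    unfolding nr_walk_iff using len nonreturning_cong[of m "\<lambda>j. butlast w ! j" "\<lambda>j. w ! j"] same by simp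
  moreover have "hd (butlast w) = u" "last (butlast w) = w ! m"
    using nr_walk_ends[OF calculation] same[of 0] same[of m] w nr_walk_ends[OF w(1)] by auto
  ultimately show "butlast w \<in> walks \<Gamma> m u (w ! m)" unfolding walks_def by simp
  show "is_edge \<Gamma> (w ! m) v" using nonreturningD(1)[OF nr, of m] nr_walk_ends(2)[OF w(1)] w by simp
qed

lemma walks_count_step:
  assumes sc: "simplicial_complex \<Gamma>" and m: "1 \<le> m"
  shows "card (walks \<Gamma> (Suc m) u v) \<le> (\<Sum>x\<in>(\<lambda>w. w ! m) ` walks \<Gamma> (Suc m) u v. card (walks \<Gamma> m u x))"
proof -
  let ?A = "walks \<Gamma> (Suc m) u v" and ?T = "(\<lambda>w. w ! m) ` walks \<Gamma> (Suc m) u v"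
  have finT: "finite ?T" using walks_finite[OF sc] by simp
  have "inj_on butlast ?A"
  proof (rule inj_onI)
    fix x y assume xy: "x \<in> ?A" "y \<in> ?A" "butlast x = butlast y"
    then have "x \<noteq> []" "y \<noteq> []" "last x = last y" unfolding walks_def nr_walk_def by auto
    have "x = butlast x @ [last x]" using \<open>x \<noteq> []\<close> by simp
    also have "\<dots> = butlast y @ [last y]" using xy(3) \<open>last x = last y\<close> by simp
    also have "\<dots> = y" using \<open>y \<noteq> []\<close> by simp
    finally show "x = y" .
  qed
  then have "card ?A = card (butlast ` ?A)" by (simp add: card_image)
  also have "\<dots> \<le> card (\<Union>x\<in>?T. walks \<Gamma> m u x)"
  proof (rule card_mono)
    show "finite (\<Union>x\<in>?T. walks \<Gamma> m u x)" by (rule finite_UN_I[OF finT walks_finite[OF sc m]])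
    show "butlast ` ?A \<subseteq> (\<Union>x\<in>?T. walks \<Gamma> m u x)"
    proof
      fix w' assume "w' \<in> butlast ` ?A"
      then obtain w where w: "w \<in> ?A" "w' = butlast w" by blast
      then have "w' \<in> walks \<Gamma> m u (w ! m)" using walks_butlast(1) by simp
      moreover have "w ! m \<in> ?T" using w(1) by simp
      ultimately show "w' \<in> (\<Union>x\<in>?T. walks \<Gamma> m u x)" by blast
    qed
  qed
  also have "\<dots> \<le> (\<Sum>x\<in>?T. card (walks \<Gamma> m u x))" by (rule card_UN_le[OF finT])
  finally show ?thesis .
qed

text \<open>If \<open>gr\<^sub>1(\<Gamma>) > 2(m+1)\<close>, the penultimate vertices of the walks of length \<open>m+1\<close> from
  \<open>u\<close> to \<open>v\<close> span, together with \<open>v\<close>, a face of \<open>\<Gamma>\<close>: any two of them form a triangle with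
  \<open>v\<close> by \<open>common_ends_face\<close>, and the flag property does the rest.\<close>
lemma penultimate_face:
  fixes \<Gamma> :: "'a::linorder set set" and K :: "'k::field itself"
  assumes sc: "simplicial_complex \<Gamma>" and m: "1 \<le> m" and girth: "enat (2 * Suc m) < girth1 K \<Gamma>"
    and nonempty: "walks \<Gamma> (Suc m) u v \<noteq> {}"
  defines "T \<equiv> (\<lambda>w. w ! m) ` walks \<Gamma> (Suc m) u v"
  shows "insert v T \<in> \<Gamma>" and "v \<notin> T"
proof -
  have "enat 3 \<le> enat (2 * Suc m)" using m by simp
  then have girth3: "enat 3 < girth1 K \<Gamma>" using girth by (rule order_le_less_trans)
  have edge: "is_edge \<Gamma> x v" if xT: "x \<in> T" for x
  proof -
    obtain w where "w \<in> walks \<Gamma> (Suc m) u v" "x = w ! m" using xT unfolding T_def by blast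
    then show ?thesis using walks_butlast(2) by simp
  qed
  show "v \<notin> T"
  proof
    assume "v \<in> T"
    then show False using edge[of v] unfolding is_edge_def by simp
  qed
  have pair: "insert x (insert y {v}) \<in> \<Gamma>" if xy: "x \<in> T" "y \<in> T" "x \<noteq> y" for x y
  proof -
    obtain w1 w2 where w: "w1 \<in> walks \<Gamma> (Suc m) u v" "w2 \<in> walks \<Gamma> (Suc m) u v" "x = w1 ! m" "y = w2 ! m"
      using xy unfolding T_def by auto
    then have walk1: "nr_walk \<Gamma> (Suc m) w1" and walk2: "nr_walk \<Gamma> (Suc m) w2"
      unfolding walks_def by auto
    have ends: "w1 ! 0 = w2 ! 0" "w1 ! Suc m = v" "w2 ! Suc m = v"
      using w nr_walk_ends[OF walk1] nr_walk_ends[OF walk2] unfolding walks_def by auto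
    have "{w1 ! m, v, w2 ! m} \<in> \<Gamma>"
      using common_ends_face[OF sc, of "Suc m" "\<lambda>j. w1 ! j" "\<lambda>j. w2 ! j"] walk1 walk2 ends girth xy w
      unfolding nr_walk_iff by auto
    moreover have "{w1 ! m, v, w2 ! m} = insert x (insert y {v})" using w by auto
    ultimately show ?thesis by simp
  qed
  obtain x where "x \<in> T" using nonempty unfolding T_def by auto
  have "T \<union> {v} \<in> \<Gamma>"
  proof (rule flag_face[OF sc girth3])
    show "finite T" using walks_finite[OF sc] unfolding T_def by simp
    show "{v} \<in> \<Gamma>" using sc_closed[OF sc, of "{x, v}" "{v}"] edge[OF \<open>x \<in> T\<close>] unfolding is_edge_def by auto
    show "T \<inter> {v} = {}" using \<open>v \<notin> T\<close> by simp
    show "\<forall>x\<in>T. insert x {v} \<in> \<Gamma>" using edge unfolding is_edge_def by simp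
    show "\<forall>x\<in>T. \<forall>y\<in>T. x \<noteq> y \<longrightarrow> insert x (insert y {v}) \<in> \<Gamma>" using pair by blast
  qed
  then show "insert v T \<in> \<Gamma>" by simp
qed

text \<open>Part (1) of the theorem, by induction on the length: the penultimate vertices form, with
  \<open>v\<close>, a face of size at most \<open>d\<close>, so there are at most \<open>d - 1\<close> of them.\<close>
lemma walks_count_bound:
  fixes \<Gamma> :: "'a::linorder set set" and K :: "'k::field itself"
  assumes sc: "simplicial_complex \<Gamma>" and d: "Max (card ` \<Gamma>) = d"
  shows "1 \<le> r \<Longrightarrow> enat (2*r) < girth1 K \<Gamma> \<Longrightarrow> card (walks \<Gamma> r u v) \<le> (d - 1) ^ (r - 1)"
proof (induction r arbitrary: v rule: nat_induct_at_least)
  case base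
  have "walks \<Gamma> 1 u v \<subseteq> {[u, v]}"
  proof
    fix w assume "w \<in> walks \<Gamma> 1 u v"
    then have "length w = 2" "hd w = u" "last w = v" unfolding walks_def nr_walk_def by auto
    then show "w \<in> {[u, v]}" by (cases w; cases "tl w"; auto)
  qed
  then have "card (walks \<Gamma> 1 u v) \<le> card {[u, v]}" by (rule card_mono[rotated]) simp
  then show ?case by simp
next
  case (Suc m)
  let ?T = "(\<lambda>w. w ! m) ` walks \<Gamma> (Suc m) u v"
  have "enat (2*m) \<le> enat (2 * Suc m)" by simp
  then have girth_m: "enat (2*m) < girth1 K \<Gamma>" using Suc.prems by (rule order_le_less_trans)
  have T: "card ?T \<le> d - 1"
  proof (cases "walks \<Gamma> (Suc m) u v = {}")
    case False
    have "Suc (card ?T) = card (insert v ?T)"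
      using penultimate_face(2)[OF sc Suc.hyps Suc.prems False] walks_finite[OF sc] by simp
    also have "\<dots> \<le> d" using face_card_le[OF sc penultimate_face(1)[OF sc Suc.hyps Suc.prems False]] d by simp
    finally show ?thesis by simp
  qed simp
  have "card (walks \<Gamma> (Suc m) u v) \<le> (\<Sum>x\<in>?T. card (walks \<Gamma> m u x))"
    by (rule walks_count_step[OF sc Suc.hyps])
  also have "\<dots> \<le> card ?T * (d - 1) ^ (m - 1)"
    using Suc.IH[OF girth_m] sum_bounded_above[of ?T "\<lambda>x. card (walks \<Gamma> m u x)"] by simp
  also have "\<dots> \<le> (d - 1) * (d - 1) ^ (m - 1)" using T by simp
  also have "\<dots> = (d - 1) ^ (Suc m - 1)" using Suc.hyps by (cases m) auto
  finally show ?case .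
qed

theorem mainTheorem7:
  fixes \<Gamma> :: "'a::linorder set set" and K :: "'k::field itself" and d r :: nat
  assumes "simplicial_complex \<Gamma>" and "sc_dim \<Gamma> = int d - 1" and "r \<ge> 1"
  shows "(girth1 K \<Gamma> > enat (2*r) \<longrightarrow>
            (\<forall>u\<in>vertices \<Gamma>. \<forall>v\<in>vertices \<Gamma>.
               card {w. nr_walk \<Gamma> r w \<and> hd w = u \<and> last w = v} \<le> (d - 1) ^ (r - 1)))
       \<and> (girth1 K \<Gamma> > enat (2*r+1) \<longrightarrow>
            (\<forall>u v p q. is_edge \<Gamma> u v \<longrightarrow>
               nr_walk \<Gamma> (r+1) p \<longrightarrow> p ! 0 = u \<longrightarrow> p ! 1 = v \<longrightarrow>
               nr_walk \<Gamma> (r+1) q \<longrightarrow> q ! 0 = v \<longrightarrow> q ! 1 = u \<longrightarrow>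
               last p \<noteq> last q))"
proof (intro conjI impI allI ballI)
  fix u v assume "enat (2*r) < girth1 K \<Gamma>"
  moreover have "Max (card ` \<Gamma>) = d" using assms(2) unfolding sc_dim_def by simp
  ultimately show "card {w. nr_walk \<Gamma> r w \<and> hd w = u \<and> last w = v} \<le> (d - 1) ^ (r - 1)"
    using walks_count_bound[OF assms(1) _ assms(3)] unfolding walks_def by blast
next
  fix u v p q
  assume "enat (2*r+1) < girth1 K \<Gamma>"
    and "nr_walk \<Gamma> (r+1) p" "p ! 0 = u" "p ! 1 = v" "nr_walk \<Gamma> (r+1) q" "q ! 0 = v" "q ! 1 = u"
  then show "last p \<noteq> last q" using opposite_walks_distinct_ends[OF assms(1) _ assms(3)] by blast
qed

end
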